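(* Let $C\in\mathbb{R}^{n\times n}$ be invertible and consider the utility $U(\theta,\omega) = \theta^T C\omega + U'(\theta,\omega)$, where $U'$ is differentiable and satisfies, at every point $(\theta,\omega)$ at which it is evaluated by the dynamics below, $$\left\|\begin{bmatrix}\nabla_\theta U'(\theta,\omega)\\ \nabla_\omega U'(\theta,\omega)\end{bmatrix}\right\|_2 \le \alpha := c\, r^{1/3} m^{-1/6} H^{5/2} \log^{1/2} m,$$ for a constant $c>0$, where $m$ is the width and $H$ the depth of the neural networks parameterizing the players and $r$ bounds the distance of the weights from their initialization. Let $(\theta_t,\omega_t)_{t\ge 0}$ be a sequence satisfying the Implicit Update (IU) dynamics $$\theta_{t+1} = \theta_t - \eta\nabla_\theta U(\theta_{t+1},\omega_{t+1}),\qquad \omega_{t+1} = \omega_t + \eta\nabla_\omega U(\theta_{t+1},\omega_{t+1})$$ with step size $\eta = 1/\sqrt{\lambda_{\max}(CC^T)}$. Then the IU dynamics converges to a neighborhood of the optimum $(0,0)$ of size $$O\!\left(\frac{1}{1-1/\sqrt{2}}\, r^{1/3} m^{-1/6} H^{5/2}\log^{1/2} m\, \frac{\sqrt{\lambda_{\max}(CC^T)}}{\lambda_{\min}(CC^T)}\right),$$ i.e. $\limsup_{t\to\infty}\left\|\begin{bmatrix}\theta_t\\ \omega_t\end{bmatrix}\right\|_2$ is bounded by a quantity of this order.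
   Context: Setting: both players of a GAN-type min-max game are overparameterized neural networks; after the reduction of a game linear in both players to the form $\theta^T C\omega$ (with $C$ invertible, equilibrium at the origin), the finite-width utility is $\theta^T C\omega$ plus a perturbation $U'$ whose gradient is bounded by the neural-tangent-kernel linearization error $O(r^{1/3}m^{-1/6}H^{5/2}\log^{1/2}m)$ (which holds with probability at least $1-e^{-\Omega(\log^2 m)}$ for networks of depth $H$ and sufficiently large width $m$ whose weights stay within distance $r$ of initialization). $\theta$ is the minimizing player and $\omega$ the maximizing player. $\lambda_{\max}(\cdot),\lambda_{\min}(\cdot)$ denote largest and smallest eigenvalues. *)

theory Defs
  imports "HOL-Analysis.Analysis"
begin

text \<open>Gradient of a real-valued function on a real inner product space:
  the (unique, when f is differentiable at x) vector g with Df(x) h = g \<bullet> h.\<close>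
definition grad :: "('a::real_inner \<Rightarrow> real) \<Rightarrow> 'a \<Rightarrow> 'a" where
  "grad f x = (THE g. (f has_derivative (\<lambda>h. g \<bullet> h)) (at x))"

definition is_eigenvalue :: "real^'n^'n \<Rightarrow> real \<Rightarrow> bool" where
  "is_eigenvalue A l \<longleftrightarrow> (\<exists>v. v \<noteq> 0 \<and> A *v v = l *\<^sub>R v)"

definition lambda_max :: "real^'n^'n \<Rightarrow> real" where
  "lambda_max A = Max {l. is_eigenvalue A l}"

definition lambda_min :: "real^'n^'n \<Rightarrow> real" where
  "lambda_min A = Min {l. is_eigenvalue A l}"

end

theory Submission
  imports Defs
begin

text \<open>Write \<open>z\<^sub>t = (\<theta>\<^sub>t, \<omega>\<^sub>t)\<close> and let \<open>(a, b)\<close> be the gradient of the perturbation at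
  \<open>z\<^sub>t\<^sub>+\<^sub>1\<close>. The implicit update can be rewritten as
  \<open>(\<theta>\<^sub>t\<^sub>+\<^sub>1 + \<eta> C \<omega>\<^sub>t\<^sub>+\<^sub>1, \<omega>\<^sub>t\<^sub>+\<^sub>1 - \<eta> C\<^sup>T \<theta>\<^sub>t\<^sub>+\<^sub>1) = z\<^sub>t + \<eta> (-a, b)\<close>.
  The field \<open>(C \<omega>, -C\<^sup>T \<theta>)\<close> of the bilinear game is orthogonal to \<open>(\<theta>, \<omega>)\<close>, so the
  squared norm of the left-hand side is
  \<open>|z\<^sub>t\<^sub>+\<^sub>1|\<^sup>2 + \<eta>\<^sup>2 (|C \<omega>\<^sub>t\<^sub>+\<^sub>1|\<^sup>2 + |C\<^sup>T \<theta>\<^sub>t\<^sub>+\<^sub>1|\<^sup>2) \<ge> (1 + \<eta>\<^sup>2 \<lambda>\<^sub>m\<^sub>i\<^sub>n) |z\<^sub>t\<^sub>+\<^sub>1|\<^sup>2\<close>,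
  using that \<open>C C\<^sup>T\<close> and \<open>C\<^sup>T C\<close> have the same eigenvalues. Hence
  \<open>k |z\<^sub>t\<^sub>+\<^sub>1| \<le> |z\<^sub>t| + \<eta> \<alpha>\<close> with \<open>k = sqrt (1 + \<eta>\<^sup>2 \<lambda>\<^sub>m\<^sub>i\<^sub>n) > 1\<close>, and the iterates approach
  the ball of radius \<open>\<eta> \<alpha> / (k - 1) = \<alpha> (k + 1) sqrt \<lambda>\<^sub>m\<^sub>a\<^sub>x / \<lambda>\<^sub>m\<^sub>i\<^sub>n\<close>, where
  \<open>k + 1 \<le> 1 + sqrt 2 \<le> 1 / (1 - 1 / sqrt 2)\<close>.\<close>

lemma grad_eqI:
  fixes f :: "'a::real_inner \<Rightarrow> real"
  assumes "(f has_derivative (\<lambda>h. g \<bullet> h)) (at x)"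
  shows "grad f x = g"
  unfolding grad_def
proof (rule the_equality)
  fix g'
  assume "(f has_derivative (\<lambda>h. g' \<bullet> h)) (at x)"
  from has_derivative_unique[OF this assms] have "(g' - g) \<bullet> (g' - g) = 0"
    by (metis inner_diff_left right_minus_eq)
  then show "g' = g" by simp
qed (rule assms)

lemma has_derivative_grad:
  fixes f :: "'a::euclidean_space \<Rightarrow> real"
  assumes "f differentiable (at x)"
  shows "(f has_derivative (\<lambda>h. grad f x \<bullet> h)) (at x)"
proof -
  obtain D where D: "(f has_derivative D) (at x)"
    using assms differentiable_def by blast
  have "D = (\<lambda>h. adjoint D 1 \<bullet> h)"
    using adjoint_clauses(2)[OF has_derivative_linear[OF D]] by (auto simp: fun_eq_iff)
  with D grad_eqI show ?thesis by metis
qed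

lemma grad_inner_add:
  fixes f :: "'a::euclidean_space \<Rightarrow> real"
  assumes "f differentiable (at x)"
  shows "grad (\<lambda>y. v \<bullet> y + f y) x = v + grad f x"
proof (rule grad_eqI)
  have "((\<lambda>y. v \<bullet> y) has_derivative (\<lambda>h. v \<bullet> h)) (at x)"
    by (intro bounded_linear_imp_has_derivative bounded_linear_inner_right)
  from has_derivative_add[OF this has_derivative_grad[OF assms]]
  show "((\<lambda>y. v \<bullet> y + f y) has_derivative (\<lambda>h. (v + grad f x) \<bullet> h)) (at x)"
    by (simp add: inner_add_left)
qed

lemma differentiable_partial_fst:
  assumes "(\<lambda>q. f (fst q) (snd q)) differentiable (at (x, y))"
  shows "(\<lambda>u. f u y) differentiable (at x)"
  using differentiable_chain_at[of "\<lambda>u. (u, y)" x, OF _ assms]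
  by (simp add: o_def differentiable_Pair)

lemma differentiable_partial_snd:
  assumes "(\<lambda>q. f (fst q) (snd q)) differentiable (at (x, y))"
  shows "(\<lambda>v. f x v) differentiable (at y)"
  using differentiable_chain_at[of "\<lambda>v. (x, v)" y, OF _ assms]
  by (simp add: o_def differentiable_Pair)

lemma grad_bilinear_add_fst:
  fixes C :: "real^'m^'n" and U :: "real^'n \<Rightarrow> real^'m \<Rightarrow> real"
  assumes "(\<lambda>q. U (fst q) (snd q)) differentiable (at (x, y))"
  shows "grad (\<lambda>u. u \<bullet> (C *v y) + U u y) x = C *v y + grad (\<lambda>u. U u y) x"
  using grad_inner_add[OF differentiable_partial_fst[OF assms], of "C *v y"]
  by (simp add: inner_commute)

lemma grad_bilinear_add_snd:
  fixes C :: "real^'m^'n" and U :: "real^'n \<Rightarrow> real^'m \<Rightarrow> real"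
  assumes "(\<lambda>q. U (fst q) (snd q)) differentiable (at (x, y))"
  shows "grad (\<lambda>v. x \<bullet> (C *v v) + U x v) y = transpose C *v x + grad (\<lambda>v. U x v) y"
  using grad_inner_add[OF differentiable_partial_snd[OF assms], of "transpose C *v x"]
  by (simp add: dot_lmul_matrix)

lemma inner_matrix_vector_symmetric:
  fixes A :: "real^'n^'n"
  assumes "transpose A = A"
  shows "x \<bullet> (A *v y) = (A *v x) \<bullet> y"
  by (metis assms dot_lmul_matrix transpose_matrix_vector inner_commute)

lemma finite_eigenvalues_symmetric:
  fixes A :: "real^'n^'n"
  assumes sym: "transpose A = A"
  shows "finite {l. is_eigenvalue A l}"
proof -
  define E where "E = {l. is_eigenvalue A l}"
  have "\<forall>l\<in>E. \<exists>v. v \<noteq> 0 \<and> A *v v = l *\<^sub>R v"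
    unfolding E_def is_eigenvalue_def by blast
  then obtain ev where ev: "\<And>l. l \<in> E \<Longrightarrow> ev l \<noteq> 0 \<and> A *v ev l = l *\<^sub>R ev l"
    using bchoice by metis
  have orth: "ev l \<bullet> ev k = 0" if "l \<in> E" "k \<in> E" "l \<noteq> k" for l k
  proof -
    have "l * (ev l \<bullet> ev k) = (A *v ev l) \<bullet> ev k" using ev[OF that(1)] by simp
    also have "\<dots> = ev l \<bullet> (A *v ev k)" using inner_matrix_vector_symmetric[OF sym] by simp
    also have "\<dots> = k * (ev l \<bullet> ev k)" using ev[OF that(2)] by simp
    finally show ?thesis using that(3) by simp
  qed
  have "inj_on ev E"
    by (rule inj_onI) (metis ev inner_eq_zero_iff orth)
  moreover have "independent (ev ` E)"
    by (rule pairwise_orthogonal_independent) (auto simp: pairwise_def orthogonal_def ev intro!: orth)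
  ultimately show ?thesis
    using independent_bound finite_imageD unfolding E_def by blast
qed

lemma quadratic_nonneg_imp_linear_coeff_zero:
  fixes d e :: real
  assumes "\<And>t. 0 \<le> 2 * t * d + t^2 * e"
  shows "d = 0"
proof (rule ccontr)
  assume "d \<noteq> 0"
  define a where "a = \<bar>e\<bar> + 2"
  have a: "a > 0" "e \<le> a" by (auto simp: a_def)
  define t where "t = - d / a"
  have "2 * t * d + t^2 * e \<le> 2 * t * d + t^2 * a"
    using a by (intro add_left_mono mult_left_mono) auto
  also have "\<dots> = - (d^2) / a"
    using a by (simp add: t_def field_simps power2_eq_square)
  also have "\<dots> < 0"
    using \<open>d \<noteq> 0\<close> a by simp
  finally show False using assms[of t] by simp
qed

lemma rayleigh_minimizer_eigenvector:
  fixes A :: "real^'n^'n"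
  assumes sym: "transpose A = A"
    and rayleigh: "\<And>x. \<mu> * (norm x)^2 \<le> x \<bullet> (A *v x)"
    and attained: "v \<bullet> (A *v v) = \<mu> * (norm v)^2"
  shows "A *v v = \<mu> *\<^sub>R v"
proof -
  define w where "w = A *v v - \<mu> *\<^sub>R v"
  have "0 \<le> 2 * t * (w \<bullet> w) + t^2 * (w \<bullet> (A *v w) - \<mu> * (norm w)^2)" for t
  proof -
    have "v \<bullet> (A *v w) = w \<bullet> (A *v v)"
      using inner_matrix_vector_symmetric[OF sym, of v w] by (simp add: inner_commute)
    then have "(v + t *\<^sub>R w) \<bullet> (A *v (v + t *\<^sub>R w))
        = v \<bullet> (A *v v) + 2 * t * (w \<bullet> (A *v v)) + t^2 * (w \<bullet> (A *v w))"
      by (simp add: matrix_vector_right_distrib matrix_vector_mult_scaleR inner_add_left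
          inner_add_right power2_eq_square algebra_simps)
    moreover have "(norm (v + t *\<^sub>R w))^2 = (norm v)^2 + 2 * t * (v \<bullet> w) + t^2 * (norm w)^2"
      unfolding power2_norm_eq_inner using inner_commute[of w v]
      by (simp add: inner_add_left inner_add_right power2_eq_square algebra_simps)
    moreover have "w \<bullet> (A *v v) = w \<bullet> w + \<mu> * (v \<bullet> w)"
      unfolding w_def by (simp add: inner_diff_right inner_diff_left inner_commute algebra_simps)
    ultimately show ?thesis
      using rayleigh[of "v + t *\<^sub>R w"] attained by (simp add: algebra_simps)
  qed
  then have "w \<bullet> w = 0" by (rule quadratic_nonneg_imp_linear_coeff_zero)
  then show ?thesis unfolding w_def by simp
qed

lemma symmetric_matrix_rayleigh_eigenvalue:
  fixes A :: "real^'n^'n"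
  assumes sym: "transpose A = A"
  shows "\<exists>\<mu>. is_eigenvalue A \<mu> \<and> (\<forall>x. \<mu> * (norm x)^2 \<le> x \<bullet> (A *v x))"
proof -
  define f where "f x = x \<bullet> (A *v x)" for x :: "real^'n"
  have "continuous_on (sphere 0 1) f"
    unfolding f_def by (intro continuous_intros linear_continuous_on matrix_vector_mul_bounded_linear)
  moreover have "sphere (0::real^'n) 1 \<noteq> {}" by simp
  ultimately obtain v where v: "v \<in> sphere 0 1" and v_min: "\<And>y. y \<in> sphere 0 1 \<Longrightarrow> f v \<le> f y"
    using continuous_attains_inf[OF compact_sphere] by blast
  have rayleigh: "f v * (norm x)^2 \<le> f x" for x
  proof (cases "x = 0")
    case False
    then have "f v \<le> f ((1 / norm x) *\<^sub>R x)" by (intro v_min) simp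
    also have "\<dots> = f x / (norm x)^2"
      by (simp add: f_def matrix_vector_mult_scaleR power2_eq_square)
    finally show ?thesis using False by (simp add: field_simps)
  qed (simp add: f_def)
  have "norm v = 1" using v by simp
  then have "A *v v = f v *\<^sub>R v"
    using rayleigh by (intro rayleigh_minimizer_eigenvector[OF sym]) (auto simp: f_def)
  moreover have "v \<noteq> 0" using \<open>norm v = 1\<close> by auto
  ultimately have "is_eigenvalue A (f v)" unfolding is_eigenvalue_def by blast
  with rayleigh show ?thesis unfolding f_def by blast
qed

lemma lambda_min_symmetric:
  fixes A :: "real^'n^'n"
  assumes sym: "transpose A = A"
  shows is_eigenvalue_lambda_min: "is_eigenvalue A (lambda_min A)"
    and lambda_min_rayleigh: "lambda_min A * (norm x)^2 \<le> x \<bullet> (A *v x)"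
proof -
  obtain \<mu> where \<mu>: "is_eigenvalue A \<mu>" and rayleigh: "\<And>x. \<mu> * (norm x)^2 \<le> x \<bullet> (A *v x)"
    using symmetric_matrix_rayleigh_eigenvalue[OF sym] by blast
  have "\<mu> \<le> l" if l: "is_eigenvalue A l" for l
  proof -
    obtain v where "v \<noteq> 0" "A *v v = l *\<^sub>R v" using l unfolding is_eigenvalue_def by blast
    then have "\<mu> * (norm v)^2 \<le> l * (norm v)^2"
      using rayleigh[of v] by (simp add: power2_norm_eq_inner)
    with \<open>v \<noteq> 0\<close> show ?thesis by simp
  qed
  then have "lambda_min A = \<mu>"
    unfolding lambda_min_def using \<mu> finite_eigenvalues_symmetric[OF sym] by (intro Min_eqI) auto
  with \<mu> rayleigh show "is_eigenvalue A (lambda_min A)" "lambda_min A * (norm x)^2 \<le> x \<bullet> (A *v x)"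
    by auto
qed

lemma lambda_min_le_lambda_max:
  fixes A :: "real^'n^'n"
  assumes "transpose A = A"
  shows "lambda_min A \<le> lambda_max A"
  unfolding lambda_max_def
  using finite_eigenvalues_symmetric[OF assms] is_eigenvalue_lambda_min[OF assms]
  by (intro Max_ge) auto

lemma transpose_mult_transpose:
  fixes B :: "real^'m^'n"
  shows "transpose (B ** transpose B) = B ** transpose B"
  by (simp add: matrix_transpose_mul transpose_transpose)

lemma inner_mult_transpose:
  fixes B :: "real^'m^'n"
  shows "x \<bullet> ((B ** transpose B) *v x) = (norm (transpose B *v x))^2"
proof -
  have "x \<bullet> ((B ** transpose B) *v x) = (transpose B *v x) \<bullet> (transpose B *v x)"
    by (metis dot_lmul_matrix matrix_vector_mul_assoc transpose_matrix_vector)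
  then show ?thesis by (simp add: power2_norm_eq_inner)
qed

lemma lambda_min_le_norm_transpose_vector:
  fixes B :: "real^'m^'n"
  shows "lambda_min (B ** transpose B) * (norm x)^2 \<le> (norm (transpose B *v x))^2"
  using lambda_min_rayleigh[OF transpose_mult_transpose] by (simp add: inner_mult_transpose)

lemma invertible_mult_vector_eq_zero:
  fixes B :: "real^'n^'n"
  assumes "invertible B" "B *v x = 0"
  shows "x = 0"
  using assms invertible_left_inverse matrix_left_invertible_ker by blast

lemma lambda_min_mult_transpose_pos:
  fixes B :: "real^'n^'n"
  assumes "invertible B"
  shows "0 < lambda_min (B ** transpose B)"
proof -
  obtain v where v: "v \<noteq> 0" "(B ** transpose B) *v v = lambda_min (B ** transpose B) *\<^sub>R v"
    using is_eigenvalue_lambda_min[OF transpose_mult_transpose] unfolding is_eigenvalue_def by auto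
  have "transpose B *v v \<noteq> 0"
    using invertible_mult_vector_eq_zero[OF transpose_invertible[OF assms]] v(1) by blast
  then have "0 < v \<bullet> ((B ** transpose B) *v v)" by (simp add: inner_mult_transpose)
  then have "0 < lambda_min (B ** transpose B) * (v \<bullet> v)" using v(2) by simp
  moreover have "0 < v \<bullet> v" using v(1) by simp
  ultimately show ?thesis using zero_less_mult_pos2 by blast
qed

lemma is_eigenvalue_mult_transpose_swap:
  fixes B :: "real^'n^'n"
  assumes "invertible B" and "is_eigenvalue (B ** transpose B) l"
  shows "is_eigenvalue (transpose B ** B) l"
proof -
  obtain v where v: "v \<noteq> 0" "(B ** transpose B) *v v = l *\<^sub>R v"
    using assms(2) unfolding is_eigenvalue_def by auto
  have "(transpose B ** B) *v (transpose B *v v) = transpose B *v ((B ** transpose B) *v v)"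
    by (simp only: matrix_vector_mul_assoc matrix_mul_assoc)
  also have "\<dots> = l *\<^sub>R (transpose B *v v)"
    using v(2) by (simp add: matrix_vector_mult_scaleR)
  finally have "(transpose B ** B) *v (transpose B *v v) = l *\<^sub>R (transpose B *v v)" .
  moreover have "transpose B *v v \<noteq> 0"
    using invertible_mult_vector_eq_zero[OF transpose_invertible[OF assms(1)]] v(1) by blast
  ultimately show ?thesis unfolding is_eigenvalue_def by blast
qed

lemma lambda_min_transpose_mult:
  fixes B :: "real^'n^'n"
  assumes "invertible B"
  shows "lambda_min (transpose B ** B) = lambda_min (B ** transpose B)"
proof -
  have "is_eigenvalue (transpose B ** B) l \<longleftrightarrow> is_eigenvalue (B ** transpose B) l" for l
    using is_eigenvalue_mult_transpose_swap[OF assms]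
      is_eigenvalue_mult_transpose_swap[OF transpose_invertible[OF assms]]
    by auto
  then have "{l. is_eigenvalue (transpose B ** B) l} = {l. is_eigenvalue (B ** transpose B) l}"
    by blast
  then show ?thesis unfolding lambda_min_def by simp
qed

lemma lambda_min_le_norm_vector:
  fixes B :: "real^'n^'n"
  assumes "invertible B"
  shows "lambda_min (B ** transpose B) * (norm x)^2 \<le> (norm (B *v x))^2"
  using lambda_min_le_norm_transpose_vector[of "transpose B" x]
  by (simp add: lambda_min_transpose_mult[OF assms] transpose_transpose)

lemma norm_Pair_square: "(norm (a, b))^2 = (norm a)^2 + (norm b)^2"
  by (simp add: norm_Pair)

lemma norm_skew_shift:
  fixes C :: "real^'m^'n" and x :: "real^'n" and y :: "real^'m"
  shows "(norm (x + s *\<^sub>R (C *v y), y - s *\<^sub>R (transpose C *v x)))^2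
    = (norm (x, y))^2 + s^2 * ((norm (C *v y))^2 + (norm (transpose C *v x))^2)"
proof -
  have "(norm (x + s *\<^sub>R (C *v y)))^2 = (norm x)^2 + s^2 * (norm (C *v y))^2 + 2 * s * (x \<bullet> (C *v y))"
    using dot_norm[of x "s *\<^sub>R (C *v y)"] by (simp add: power_mult_distrib)
  moreover have "(norm (y - s *\<^sub>R (transpose C *v x)))^2
      = (norm y)^2 + s^2 * (norm (transpose C *v x))^2 - 2 * s * (y \<bullet> (transpose C *v x))"
    using dot_norm_neg[of y "s *\<^sub>R (transpose C *v x)"] by (simp add: power_mult_distrib)
  moreover have "x \<bullet> (C *v y) = y \<bullet> (transpose C *v x)"
    using dot_lmul_matrix[of x C y] inner_commute[of y "x v* C"] by simp
  ultimately show ?thesis by (simp add: norm_Pair_square algebra_simps)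
qed

lemma implicit_step_contraction:
  fixes C :: "real^'m^'n" and \<theta> \<theta>' a :: "real^'n" and \<omega> \<omega>' b :: "real^'m"
  assumes "0 \<le> \<mu>" and "0 \<le> \<eta>"
    and low_transpose: "\<And>x. \<mu> * (norm x)^2 \<le> (norm (transpose C *v x))^2"
    and low: "\<And>y. \<mu> * (norm y)^2 \<le> (norm (C *v y))^2"
    and \<theta>': "\<theta>' = \<theta> - \<eta> *\<^sub>R (C *v \<omega>' + a)"
    and \<omega>': "\<omega>' = \<omega> + \<eta> *\<^sub>R (transpose C *v \<theta>' + b)"
  shows "sqrt (1 + \<eta>^2 * \<mu>) * norm (\<theta>', \<omega>') \<le> norm (\<theta>, \<omega>) + \<eta> * norm (a, b)"
proof -
  define z where "z = (\<theta>' + \<eta> *\<^sub>R (C *v \<omega>'), \<omega>' - \<eta> *\<^sub>R (transpose C *v \<theta>'))"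
  have "(sqrt (1 + \<eta>^2 * \<mu>) * norm (\<theta>', \<omega>'))^2
      = (norm (\<theta>', \<omega>'))^2 + \<eta>^2 * (\<mu> * (norm \<omega>')^2 + \<mu> * (norm \<theta>')^2)"
    using \<open>0 \<le> \<mu>\<close> by (simp add: power_mult_distrib norm_Pair_square algebra_simps)
  also have "\<dots> \<le> (norm z)^2"
    unfolding z_def norm_skew_shift
    using low_transpose[of \<theta>'] low[of \<omega>'] by (intro add_left_mono mult_left_mono add_mono) auto
  finally have "sqrt (1 + \<eta>^2 * \<mu>) * norm (\<theta>', \<omega>') \<le> norm z"
    by (rule power2_le_imp_le) simp
  also have "z = (\<theta>, \<omega>) + \<eta> *\<^sub>R (- a, b)"
  proof -
    have "\<theta>' + \<eta> *\<^sub>R (C *v \<omega>') = \<theta> - \<eta> *\<^sub>R a"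
      using \<theta>' by (simp add: algebra_simps)
    moreover have "\<omega>' - \<eta> *\<^sub>R (transpose C *v \<theta>') = \<omega> + \<eta> *\<^sub>R b"
      using \<omega>' by (simp add: algebra_simps)
    ultimately show ?thesis unfolding z_def by simp
  qed
  also have "norm \<dots> \<le> norm (\<theta>, \<omega>) + norm (\<eta> *\<^sub>R (- a, b))"
    by (rule norm_triangle_ineq)
  also have "norm (\<eta> *\<^sub>R (- a, b)) = \<eta> * norm (a, b)"
    using \<open>0 \<le> \<eta>\<close> by (simp only: norm_scaleR) (simp add: norm_Pair)
  finally show ?thesis .
qed

lemma implicit_gradient_step_contraction:
  fixes C :: "real^'n^'n" and U :: "real^'n \<Rightarrow> real^'n \<Rightarrow> real"
  assumes "invertible C" and "0 \<le> \<eta>"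
    and diff: "(\<lambda>q. U (fst q) (snd q)) differentiable (at (\<theta>', \<omega>'))"
    and \<theta>': "\<theta>' = \<theta> - \<eta> *\<^sub>R grad (\<lambda>x. x \<bullet> (C *v \<omega>') + U x \<omega>') \<theta>'"
    and \<omega>': "\<omega>' = \<omega> + \<eta> *\<^sub>R grad (\<lambda>y. \<theta>' \<bullet> (C *v y) + U \<theta>' y) \<omega>'"
  shows "sqrt (1 + \<eta>^2 * lambda_min (C ** transpose C)) * norm (\<theta>', \<omega>')
    \<le> norm (\<theta>, \<omega>) + \<eta> * norm (grad (\<lambda>x. U x \<omega>') \<theta>', grad (\<lambda>y. U \<theta>' y) \<omega>')"
proof -
  have "\<theta>' = \<theta> - \<eta> *\<^sub>R (C *v \<omega>' + grad (\<lambda>x. U x \<omega>') \<theta>')"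
    using \<theta>' unfolding grad_bilinear_add_fst[OF diff] .
  moreover have "\<omega>' = \<omega> + \<eta> *\<^sub>R (transpose C *v \<theta>' + grad (\<lambda>y. U \<theta>' y) \<omega>')"
    using \<omega>' unfolding grad_bilinear_add_snd[OF diff] .
  moreover have "0 \<le> lambda_min (C ** transpose C)"
    using lambda_min_mult_transpose_pos[OF \<open>invertible C\<close>] by simp
  ultimately show ?thesis
    using \<open>0 \<le> \<eta>\<close> lambda_min_le_norm_transpose_vector lambda_min_le_norm_vector[OF \<open>invertible C\<close>]
    by (intro implicit_step_contraction)
qed

lemma limsup_le_of_scaled_step_le:
  fixes N :: "nat \<Rightarrow> real"
  assumes "1 < k" and step: "\<And>t. k * N (Suc t) \<le> N t + \<beta>"
  shows "limsup (\<lambda>t. ereal (N t)) \<le> ereal (\<beta> / (k - 1))"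
proof -
  define L where "L = \<beta> / (k - 1)"
  define K where "K = \<bar>N 0 - L\<bar>"
  have fixed_point: "k * L = L + \<beta>"
    using \<open>1 < k\<close> by (simp add: L_def field_simps)
  have decay: "N t - L \<le> K / k^t" for t
  proof (induction t)
    case 0
    show ?case by (simp add: K_def)
  next
    case (Suc t)
    have "k * (N (Suc t) - L) \<le> N t - L"
      using step[of t] by (simp add: right_diff_distrib fixed_point)
    also have "\<dots> \<le> K / k^t" by (rule Suc.IH)
    finally show ?case using \<open>1 < k\<close> by (simp add: field_simps)
  qed
  have "(\<lambda>t. L + K / k^t) \<longlonglongrightarrow> L + 0"
    using LIMSEQ_divide_realpow_zero[OF \<open>1 < k\<close>] by (intro tendsto_add tendsto_const)
  then have "limsup (\<lambda>t. ereal (L + K / k^t)) = ereal L"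
    by (intro lim_imp_Limsup) auto
  moreover have "limsup (\<lambda>t. ereal (N t)) \<le> limsup (\<lambda>t. ereal (L + K / k^t))"
    using decay by (intro Limsup_mono) (auto simp: algebra_simps)
  ultimately show ?thesis unfolding L_def by simp
qed

lemma implicit_update_radius_le:
  fixes \<mu> \<Lambda> \<alpha> :: real
  assumes "0 < \<mu>" "\<mu> \<le> \<Lambda>" "0 \<le> \<alpha>"
  shows "(1 / sqrt \<Lambda>) * \<alpha> / (sqrt (1 + (1 / sqrt \<Lambda>)^2 * \<mu>) - 1)
    \<le> 1 / (1 - 1 / sqrt 2) * \<alpha> * sqrt \<Lambda> / \<mu>"
proof -
  have "0 < \<Lambda>" using assms by simp
  define k where "k = sqrt (1 + \<mu> / \<Lambda>)"
  have "1 < k" using assms \<open>0 < \<Lambda>\<close> by (simp add: k_def)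
  have "k \<le> sqrt 2" using assms \<open>0 < \<Lambda>\<close> by (simp add: k_def)
  have k_sq: "(k - 1) * (k + 1) = \<mu> / \<Lambda>"
    using assms \<open>0 < \<Lambda>\<close> by (simp add: k_def algebra_simps power2_eq_square[symmetric])
  have "(1 / sqrt \<Lambda>) * \<alpha> / (sqrt (1 + (1 / sqrt \<Lambda>)^2 * \<mu>) - 1)
      = \<alpha> / (sqrt \<Lambda> * (k - 1))"
    using \<open>0 < \<Lambda>\<close> by (simp add: k_def power_divide)
  also have "\<dots> = \<alpha> * (k + 1) * sqrt \<Lambda> / \<mu>"
    using k_sq \<open>1 < k\<close> \<open>0 < \<Lambda>\<close> \<open>0 < \<mu>\<close> by (simp add: field_simps)
  also have "\<dots> \<le> \<alpha> * (2 + sqrt 2) * sqrt \<Lambda> / \<mu>"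
    using \<open>k \<le> sqrt 2\<close> assms by (intro divide_right_mono mult_right_mono mult_left_mono) auto
  also have "2 + sqrt 2 = 1 / (1 - 1 / sqrt 2)"
    by (simp add: field_simps)
  finally show ?thesis by (simp add: mult_ac)
qed

theorem theorem1:
  fixes C :: "real^'n^'n"
    and U' :: "real^'n \<Rightarrow> real^'n \<Rightarrow> real"
    and \<theta> \<omega> :: "nat \<Rightarrow> real^'n"
    and c r :: real and m H :: nat
  assumes invC: "invertible C"
    and cpos: "c > 0" and rpos: "r > 0" and m2: "m \<ge> 2" and H1: "H \<ge> 1"
    and diff: "\<And>p. (\<lambda>q. U' (fst q) (snd q)) differentiable (at p)"
    and bound: "\<And>t. norm (grad (\<lambda>x. U' x (\<omega> (Suc t))) (\<theta> (Suc t)),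
                            grad (\<lambda>y. U' (\<theta> (Suc t)) y) (\<omega> (Suc t)))
                 \<le> c * r powr (1/3) * real m powr (-1/6) * real H powr (5/2) * sqrt (ln (real m))"
    and IU: "\<And>t. \<theta> (Suc t) = \<theta> t - (1 / sqrt (lambda_max (C ** transpose C))) *\<^sub>R
                     grad (\<lambda>x. x \<bullet> (C *v \<omega> (Suc t)) + U' x (\<omega> (Suc t))) (\<theta> (Suc t))
             \<and> \<omega> (Suc t) = \<omega> t + (1 / sqrt (lambda_max (C ** transpose C))) *\<^sub>R
                     grad (\<lambda>y. \<theta> (Suc t) \<bullet> (C *v y) + U' (\<theta> (Suc t)) y) (\<omega> (Suc t))"
  shows "limsup (\<lambda>t. ereal (norm (\<theta> t, \<omega> t)))
           \<le> ereal (1 / (1 - 1 / sqrt 2)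
                    * (c * r powr (1/3) * real m powr (-1/6) * real H powr (5/2) * sqrt (ln (real m)))
                    * sqrt (lambda_max (C ** transpose C)) / lambda_min (C ** transpose C))"
proof -
  define \<alpha> where "\<alpha> = c * r powr (1/3) * real m powr (-1/6) * real H powr (5/2) * sqrt (ln (real m))"
  define \<Lambda> where "\<Lambda> = lambda_max (C ** transpose C)"
  define \<mu> where "\<mu> = lambda_min (C ** transpose C)"
  define \<eta> where "\<eta> = 1 / sqrt \<Lambda>"
  have "0 < \<mu>" unfolding \<mu>_def using invC by (rule lambda_min_mult_transpose_pos)
  moreover have "\<mu> \<le> \<Lambda>" unfolding \<mu>_def \<Lambda>_def by (rule lambda_min_le_lambda_max[OF transpose_mult_transpose])
  ultimately have "0 \<le> \<eta>" and "1 < sqrt (1 + \<eta>^2 * \<mu>)" unfolding \<eta>_def by auto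
  have "0 \<le> \<alpha>" using bound[of 0] unfolding \<alpha>_def by (rule order_trans[OF norm_ge_zero])
  have "sqrt (1 + \<eta>^2 * \<mu>) * norm (\<theta> (Suc t), \<omega> (Suc t)) \<le> norm (\<theta> t, \<omega> t) + \<eta> * \<alpha>" for t
  proof -
    have "sqrt (1 + \<eta>^2 * \<mu>) * norm (\<theta> (Suc t), \<omega> (Suc t))
        \<le> norm (\<theta> t, \<omega> t) + \<eta> * norm (grad (\<lambda>x. U' x (\<omega> (Suc t))) (\<theta> (Suc t)),
                                          grad (\<lambda>y. U' (\<theta> (Suc t)) y) (\<omega> (Suc t)))"
      unfolding \<mu>_def
      using invC \<open>0 \<le> \<eta>\<close> diff IU[of t, folded \<Lambda>_def \<eta>_def]
      by (intro implicit_gradient_step_contraction) auto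
    also have "\<dots> \<le> norm (\<theta> t, \<omega> t) + \<eta> * \<alpha>"
      using bound[of t] \<open>0 \<le> \<eta>\<close> unfolding \<alpha>_def by (simp add: mult_left_mono)
    finally show ?thesis .
  qed
  with \<open>1 < sqrt (1 + \<eta>^2 * \<mu>)\<close>
  have "limsup (\<lambda>t. ereal (norm (\<theta> t, \<omega> t))) \<le> ereal (\<eta> * \<alpha> / (sqrt (1 + \<eta>^2 * \<mu>) - 1))"
    by (rule limsup_le_of_scaled_step_le)
  also have "\<dots> \<le> ereal (1 / (1 - 1 / sqrt 2) * \<alpha> * sqrt \<Lambda> / \<mu>)"
    using implicit_update_radius_le[OF \<open>0 < \<mu>\<close> \<open>\<mu> \<le> \<Lambda>\<close> \<open>0 \<le> \<alpha>\<close>] unfolding \<eta>_def by simp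
  finally show ?thesis unfolding \<alpha>_def \<Lambda>_def \<mu>_def .
qed

end
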